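(* Let $l\mathcal D^{cst}(\binom{n_1}{m_1},\binom{n_2}{m_2})\subseteq l\mathcal D(\binom{n_1}{m_1},\binom{n_2}{m_2})$ be the subcomplex spanned by looped diagrams having at least one constant loop, and $i$ its inclusion. Each $p_j$ is a chain map, and the chain map \[p_{cst}=\sum_{k=1}^{n_1}\ \sum_{T\subseteq\{1,\dots,n_1\},\,|T|=k}(-1)^{k+1}p_T\colon l\mathcal D(\tbinom{n_1}{m_1},\tbinom{n_2}{m_2})\to l\mathcal D^{cst}(\tbinom{n_1}{m_1},\tbinom{n_2}{m_2})\] satisfies $p_{cst}\circ i=\mathrm{id}$. Consequently $l\mathcal D(\binom{n_1}{m_1},\binom{n_2}{m_2})\cong l\mathcal D^{cst}(\binom{n_1}{m_1},\binom{n_2}{m_2})\oplus l\mathcal D^{>0}(\binom{n_1}{m_1},\binom{n_2}{m_2})$ as chain complexes.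
   Context: $l\mathcal D(\binom{n_1}{m_1},\binom{n_2}{m_2})$ is the chain complex of looped diagrams $(\Gamma,\gamma_1,\dots,\gamma_{n_1})$: $\Gamma$ is a commutative Sullivan diagram (fat graph with $n_2$ ordered white vertices each with a start half-edge, trivalent black vertices, $n_1+m_1+m_2$ labelled leaves, modulo forgetting cyclic orders at black vertices and slide moves) and $\gamma_j$ is a loop based at the arc component (component after deleting white vertices) of leaf $j$, i.e. a sequence of oriented boundary segments of white vertices (arcs between consecutive half-edges) starting and ending at that arc component, consecutive segments meeting at a common arc component, no segment immediately followed by its reverse; the empty sequence is the constant loop. The differential is the signed sum of contractions of single boundary segments (merging the two bounding half-edges at a new black vertex and deleting the segment from the loops). For $1\le j\le n_1$, $p_j(\Gamma,\gamma_1,\dots,\gamma_{n_1})=(\Gamma,\gamma_1,\dots,\gamma_{j-1},cst,\gamma_{j+1},\dots,\gamma_{n_1})$ with $cst$ the constant loop at leaf $j$; for $T=\{t_1,\dots,t_k\}$, $p_T=p_{t_k}\circ\cdots\circ p_{t_1}$ ($p_\emptyset=\mathrm{id}$). $l\mathcal D^{>0}$ is the subcomplex spanned by the elements $(\Gamma,\langle\gamma_1\rangle,\dots,\langle\gamma_{n_1}\rangle):=x-p_{cst}(x)=\sum_{T\subseteq\{1..n_1\}}(-1)^{|T|}p_T(x)$ for looped diagrams $x=(\Gamma,\gamma_1,\dots,\gamma_{n_1})$. *)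

theory Defs
  imports Main "HOL-Library.Poly_Mapping"
begin

text \<open>Points of a diagram: half-edge number i (counted from the start half-edge,
  in the cyclic order) at white vertex v, or the leaf labelled l.\<close>
datatype pt = HE nat nat | Leaf nat

text \<open>An oriented boundary segment (v, i, fw): the boundary segment of white vertex v
  between half-edges i and (i+1) mod k_v; fw = True means traversed from half-edge i
  to half-edge (i+1) mod k_v, fw = False the reverse.\<close>
type_synonym seg = "nat \<times> nat \<times> bool"

text \<open>A looped diagram: number of half-edges at each white vertex, the partition of
  all half-edges and leaves into arc components, and the loops gamma_1 .. gamma_{n1}
  (entry j-1 of the list is gamma_j).\<close>
datatype ldiag = LDiag (wv: "nat list") (comps: "pt set set") (loops: "seg list list")

definition points :: "nat \<Rightarrow> nat \<Rightarrow> nat \<Rightarrow> nat list \<Rightarrow> pt set" where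
  "points n1 m1 m2 ks = {HE v i |v i. v < length ks \<and> i < ks ! v} \<union> {Leaf l |l. 1 \<le> l \<and> l \<le> n1 + m1 + m2}"

definition samecomp :: "pt set set \<Rightarrow> pt \<Rightarrow> pt \<Rightarrow> bool" where
  "samecomp C p q \<longleftrightarrow> (\<exists>B\<in>C. p \<in> B \<and> q \<in> B)"

definition wconn :: "pt set set \<Rightarrow> (nat \<times> nat) set" where
  "wconn C = {(v, w). \<exists>B\<in>C. \<exists>a b. HE v a \<in> B \<and> HE w b \<in> B}"

text \<open>Each arc component is a black tree (trivalent inner vertices) whose boundary points are
  the half-edges and leaves in it; modulo slide moves and forgetting cyclic orders at black
  vertices such a tree is determined by this set, which must have at least 2 elements and
  contain a half-edge; the whole graph is connected.\<close>
definition valid_diag :: "nat \<Rightarrow> nat \<Rightarrow> nat \<Rightarrow> nat \<Rightarrow> nat list \<Rightarrow> pt set set \<Rightarrow> bool" where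
  "valid_diag n1 m1 n2 m2 ks C \<longleftrightarrow>
     length ks = n2 \<and> (\<forall>v<n2. 1 \<le> ks ! v) \<and>
     \<Union>C = points n1 m1 m2 ks \<and>
     (\<forall>B\<in>C. \<forall>B'\<in>C. B \<noteq> B' \<longrightarrow> B \<inter> B' = {}) \<and>
     (\<forall>B\<in>C. 2 \<le> card B \<and> (\<exists>v i. HE v i \<in> B)) \<and>
     (\<forall>v<n2. \<forall>w<n2. (v, w) \<in> (wconn C)\<^sup>*)"

definition seg_src :: "nat list \<Rightarrow> seg \<Rightarrow> pt" where
  "seg_src ks s = (case s of (v, i, fw) \<Rightarrow> if fw then HE v i else HE v (Suc i mod (ks ! v)))"

definition seg_tgt :: "nat list \<Rightarrow> seg \<Rightarrow> pt" where
  "seg_tgt ks s = (case s of (v, i, fw) \<Rightarrow> if fw then HE v (Suc i mod (ks ! v)) else HE v i)"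

definition seg_inv :: "seg \<Rightarrow> seg" where
  "seg_inv s = (case s of (v, i, fw) \<Rightarrow> (v, i, \<not> fw))"

definition valid_loop :: "nat list \<Rightarrow> pt set set \<Rightarrow> nat \<Rightarrow> seg list \<Rightarrow> bool" where
  "valid_loop ks C j g \<longleftrightarrow>
     (\<forall>s\<in>set g. case s of (v, i, fw) \<Rightarrow> v < length ks \<and> i < ks ! v) \<and>
     (g \<noteq> [] \<longrightarrow> samecomp C (Leaf j) (seg_src ks (hd g)) \<and> samecomp C (seg_tgt ks (last g)) (Leaf j)) \<and>
     (\<forall>k. Suc k < length g \<longrightarrow> samecomp C (seg_tgt ks (g ! k)) (seg_src ks (g ! Suc k))) \<and>
     (\<forall>k. Suc k < length g \<longrightarrow> g ! Suc k \<noteq> seg_inv (g ! k))"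

definition valid_ld :: "nat \<Rightarrow> nat \<Rightarrow> nat \<Rightarrow> nat \<Rightarrow> ldiag set" where
  "valid_ld n1 m1 n2 m2 = {x. valid_diag n1 m1 n2 m2 (wv x) (comps x) \<and> length (loops x) = n1 \<and>
      (\<forall>j\<in>{1..n1}. valid_loop (wv x) (comps x) j (loops x ! (j - 1)))}"

definition deg :: "ldiag \<Rightarrow> nat" where
  "deg x = (\<Sum>v<length (wv x). wv x ! v - 1)"

text \<open>Renaming of half-edge indices at white vertex v (with k half-edges) when segment i
  is contracted (half-edges i and (i+1) mod k are merged).\<close>
definition new_idx :: "nat \<Rightarrow> nat \<Rightarrow> nat \<Rightarrow> nat" where
  "new_idx k i m = (if Suc i = k \<and> Suc m = k then 0 else if m \<le> i then m else m - 1)"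

definition ren_pt :: "nat \<Rightarrow> nat \<Rightarrow> nat \<Rightarrow> pt \<Rightarrow> pt" where
  "ren_pt k v i p = (case p of HE w m \<Rightarrow> if w = v then HE v (new_idx k i m) else HE w m | Leaf l \<Rightarrow> Leaf l)"

definition contract_comps :: "nat list \<Rightarrow> pt set set \<Rightarrow> nat \<Rightarrow> nat \<Rightarrow> pt set set" where
  "contract_comps ks C v i =
     (let k = ks ! v; a = HE v i; b = HE v (Suc i mod k);
          merged = {B\<in>C. a \<in> B \<or> b \<in> B} in
      (\<lambda>B. ren_pt k v i ` B) ` ((C - merged) \<union> {\<Union>merged}))"

definition del_seg :: "nat \<Rightarrow> nat \<Rightarrow> seg list \<Rightarrow> seg list" where
  "del_seg v i g = map (\<lambda>(w, m, fw). if w = v \<and> i < m then (w, m - 1, fw) else (w, m, fw))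
                     (filter (\<lambda>(w, m, fw). \<not> (w = v \<and> m = i)) g)"

definition freduce :: "seg list \<Rightarrow> seg list" where
  "freduce g = foldr (\<lambda>s acc. case acc of [] \<Rightarrow> [s] | t # r \<Rightarrow> if t = seg_inv s then r else s # acc) g []"

definition contract :: "ldiag \<Rightarrow> nat \<Rightarrow> nat \<Rightarrow> ldiag" where
  "contract x v i = LDiag ((wv x)[v := wv x ! v - 1]) (contract_comps (wv x) (comps x) v i)
                          (map (\<lambda>g. freduce (del_seg v i g)) (loops x))"

definition csign :: "ldiag \<Rightarrow> nat \<Rightarrow> nat \<Rightarrow> int" where
  "csign x v i = (-1) ^ ((\<Sum>w<v. wv x ! w - 1) + i)"

text \<open>Differential on a basis element; a contraction merging two half-edges of the same
  arc component would create a black cycle (degenerate) and contributes zero.\<close>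
definition dbasis :: "ldiag \<Rightarrow> ldiag \<Rightarrow>\<^sub>0 int" where
  "dbasis x = (\<Sum>v<length (wv x). \<Sum>i<wv x ! v.
      if samecomp (comps x) (HE v i) (HE v (Suc i mod (wv x ! v))) then 0
      else frag_cmul (csign x v i) (frag_of (contract x v i)))"

definition dd :: "(ldiag \<Rightarrow>\<^sub>0 int) \<Rightarrow> (ldiag \<Rightarrow>\<^sub>0 int)" where
  "dd = frag_extend dbasis"

definition LD :: "nat \<Rightarrow> nat \<Rightarrow> nat \<Rightarrow> nat \<Rightarrow> (ldiag \<Rightarrow>\<^sub>0 int) set" where
  "LD n1 m1 n2 m2 = {f. Poly_Mapping.keys f \<subseteq> valid_ld n1 m1 n2 m2}"

definition LDcst :: "nat \<Rightarrow> nat \<Rightarrow> nat \<Rightarrow> nat \<Rightarrow> (ldiag \<Rightarrow>\<^sub>0 int) set" where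
  "LDcst n1 m1 n2 m2 = {f. Poly_Mapping.keys f \<subseteq> {x \<in> valid_ld n1 m1 n2 m2. \<exists>j\<in>{1..n1}. loops x ! (j - 1) = []}}"

definition p_basis :: "nat \<Rightarrow> ldiag \<Rightarrow> ldiag" where
  "p_basis j x = LDiag (wv x) (comps x) ((loops x)[j - 1 := []])"

definition pj :: "nat \<Rightarrow> (ldiag \<Rightarrow>\<^sub>0 int) \<Rightarrow> (ldiag \<Rightarrow>\<^sub>0 int)" where
  "pj j = frag_extend (\<lambda>x. frag_of (p_basis j x))"

definition pT :: "nat set \<Rightarrow> (ldiag \<Rightarrow>\<^sub>0 int) \<Rightarrow> (ldiag \<Rightarrow>\<^sub>0 int)" where
  "pT T = fold (\<lambda>t g. pj t \<circ> g) (sorted_list_of_set T) id"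

definition pcst :: "nat \<Rightarrow> (ldiag \<Rightarrow>\<^sub>0 int) \<Rightarrow> (ldiag \<Rightarrow>\<^sub>0 int)" where
  "pcst n1 f = (\<Sum>k\<in>{1..n1}. \<Sum>T\<in>{T. T \<subseteq> {1..n1} \<and> card T = k}. frag_cmul ((-1) ^ (k + 1)) (pT T f))"

definition LDpos :: "nat \<Rightarrow> nat \<Rightarrow> nat \<Rightarrow> nat \<Rightarrow> (ldiag \<Rightarrow>\<^sub>0 int) set" where
  "LDpos n1 m1 n2 m2 = {frag_extend (\<lambda>x. frag_of x - pcst n1 (frag_of x)) c |c. Poly_Mapping.keys c \<subseteq> valid_ld n1 m1 n2 m2}"

definition homog :: "nat \<Rightarrow> (ldiag \<Rightarrow>\<^sub>0 int) \<Rightarrow> bool" where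
  "homog n f \<longleftrightarrow> (\<forall>x\<in>Poly_Mapping.keys f. deg x = n)"

definition chain_map :: "((ldiag \<Rightarrow>\<^sub>0 int) \<Rightarrow> (ldiag \<Rightarrow>\<^sub>0 int)) \<Rightarrow> (ldiag \<Rightarrow>\<^sub>0 int) set \<Rightarrow> (ldiag \<Rightarrow>\<^sub>0 int) set \<Rightarrow> bool" where
  "chain_map F A B \<longleftrightarrow> (\<forall>f\<in>A. F f \<in> B) \<and> (\<forall>f\<in>A. \<forall>g\<in>A. F (f + g) = F f + F g) \<and>
     (\<forall>f\<in>A. \<forall>n. homog n f \<longrightarrow> homog n (F f)) \<and> (\<forall>f\<in>A. F (dd f) = dd (F f))"

text \<open>Subcomplex: a subgroup closed under d, spanned by homogeneous elements
  is not required separately (checked via the direct sum decomposition).\<close>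
definition subcomplex :: "(ldiag \<Rightarrow>\<^sub>0 int) set \<Rightarrow> (ldiag \<Rightarrow>\<^sub>0 int) set \<Rightarrow> bool" where
  "subcomplex S A \<longleftrightarrow> S \<subseteq> A \<and> 0 \<in> S \<and> (\<forall>f\<in>S. \<forall>g\<in>S. f - g \<in> S) \<and> (\<forall>f\<in>S. dd f \<in> S)"

end

theory Submission
  imports Defs
begin

text \<open>
  All maps involved are linear extensions of maps on looped diagrams. The map p_T replaces the
  loops with index in T by constant loops; this does not change the underlying diagram, and
  contracting a boundary segment sends a constant loop to a constant loop, so p_T commutes with
  the differential and p_cst is a chain map. If the j-th loop of x is constant then
  p_T x = p_(T \<union> {j}) x, so the terms of the alternating sum cancel in pairs T, T \<union> {j} and
  p_cst x = x. Thus p_cst is a projection onto lD^cst, and lD^>0 = (id - p_cst)(lD) is a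
  complementary subcomplex. The only non-formal ingredient is that the differential stays inside
  valid looped diagrams: contracting a non-degenerate segment merges two arc components, and the
  loops, with the segment deleted and freely reduced, are again reduced walks through arc
  components.
\<close>

section \<open>Linear extensions of maps on diagrams\<close>

lemma frag_extend_frag_extend:
  "frag_extend f (frag_extend g c) = frag_extend (\<lambda>x. frag_extend f (g x)) c"
  using subset_UNIV by (induction c rule: frag_induction) (auto simp: frag_extend_diff)

lemma frag_extend_fun_diff:
  "frag_extend (\<lambda>x. f x - g x) c = frag_extend f c - frag_extend g c"
  using subset_UNIV by (induction c rule: frag_induction) (auto simp: frag_extend_diff)

lemma frag_cmul_diff_distrib2: "frag_cmul c (a - b) = frag_cmul c a - frag_cmul c b"
  by (rule poly_mapping_eqI) (simp add: lookup_minus algebra_simps)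

lemma additive_eq_frag_extend:
  assumes "\<And>a b. F (a - b) = F a - F b"
  shows "F c = frag_extend (\<lambda>x. F (frag_of x)) c"
proof -
  have F0: "F 0 = 0" using assms[of 0 0] by simp
  show ?thesis using subset_UNIV
    by (induction c rule: frag_induction) (auto simp: frag_extend_diff assms F0)
qed

lemma keys_frag_extend_frag_of: "Poly_Mapping.keys (frag_extend (frag_of \<circ> h) c) \<subseteq> h ` Poly_Mapping.keys c"
  using keys_frag_extend[of "frag_of \<circ> h" c] by auto

lemma sum_Pow_alternating_eq_0:
  assumes "finite A" "a \<in> A" and g: "\<And>T. T \<subseteq> A \<Longrightarrow> g (insert a T) = g T"
  shows "(\<Sum>T\<in>Pow A. frag_cmul ((-1) ^ card T) (g T)) = 0"
proof -
  define A' where "A' = A - {a}"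
  have A: "A = insert a A'" "a \<notin> A'" "finite A'" using assms by (auto simp: A'_def)
  have "(\<Sum>T\<in>Pow A. frag_cmul ((-1) ^ card T) (g T))
      = (\<Sum>T\<in>Pow A'. frag_cmul ((-1) ^ card T) (g T))
        + (\<Sum>T\<in>Pow A'. frag_cmul ((-1) ^ card (insert a T)) (g (insert a T)))"
    unfolding A(1) Pow_insert
    by (subst sum.union_disjoint, use A in auto)
       (rule sum.reindex_cong[where l="insert a"], use A in \<open>auto simp: inj_on_def\<close>)
  also have "(\<Sum>T\<in>Pow A'. frag_cmul ((-1) ^ card (insert a T)) (g (insert a T)))
      = - (\<Sum>T\<in>Pow A'. frag_cmul ((-1) ^ card T) (g T))"
    unfolding sum_negf[symmetric]
  proof (rule sum.cong[OF refl])
    fix T assume "T \<in> Pow A'"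
    then have "finite T" "a \<notin> T" "T \<subseteq> A" using A finite_subset by auto
    then show "frag_cmul ((-1) ^ card (insert a T)) (g (insert a T)) = - frag_cmul ((-1) ^ card T) (g T)"
      by (simp add: g)
  qed
  finally show ?thesis by simp
qed

lemma dd_sum: "finite I \<Longrightarrow> dd (sum g I) = (\<Sum>i\<in>I. dd (g i))"
  by (simp add: dd_def frag_extend_sum comp_def)

lemma dd_cmul: "dd (frag_cmul c a) = frag_cmul c (dd a)"
  by (simp add: dd_def frag_extend_cmul)

lemma dd_diff: "dd (a - b) = dd a - dd b"
  by (simp add: dd_def frag_extend_diff)

lemma keys_dd_subset:
  assumes "Poly_Mapping.keys f \<subseteq> S" "\<And>x. x \<in> S \<Longrightarrow> Poly_Mapping.keys (dbasis x) \<subseteq> S"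
  shows "Poly_Mapping.keys (dd f) \<subseteq> S"
  using keys_frag_extend[of dbasis f] assms unfolding dd_def by blast

lemma subcomplex_span:
  assumes "S \<subseteq> S'" "\<And>x. x \<in> S \<Longrightarrow> Poly_Mapping.keys (dbasis x) \<subseteq> S"
  shows "subcomplex {f. Poly_Mapping.keys f \<subseteq> S} {f. Poly_Mapping.keys f \<subseteq> S'}"
  unfolding subcomplex_def
proof (intro conjI ballI)
  fix f g :: "ldiag \<Rightarrow>\<^sub>0 int"
  assume "f \<in> {f. Poly_Mapping.keys f \<subseteq> S}" "g \<in> {f. Poly_Mapping.keys f \<subseteq> S}"
  then show "f - g \<in> {f. Poly_Mapping.keys f \<subseteq> S}" using keys_diff[of f g] by auto
qed (use assms keys_dd_subset in auto)

lemma dbasis_basis_map: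
  assumes "\<And>x. wv (h x) = wv x" "\<And>x. comps (h x) = comps x"
    and "\<And>x v i. contract (h x) v i = h (contract x v i)"
  shows "dbasis (h x) = frag_extend (frag_of \<circ> h) (dbasis x)"
  unfolding dbasis_def
  by (simp add: frag_extend_sum comp_def csign_def assms frag_extend_cmul
      if_distrib[of "frag_extend _"] cong: if_cong)

lemma basis_map_dd:
  assumes "\<And>x. dbasis (h x) = frag_extend (frag_of \<circ> h) (dbasis x)"
  shows "frag_extend (frag_of \<circ> h) (dd f) = dd (frag_extend (frag_of \<circ> h) f)"
  by (simp add: dd_def frag_extend_frag_extend frag_extend_compose assms comp_def)

lemma chain_map_basis_map:
  assumes "h ` S \<subseteq> S'" "\<And>x. deg (h x) = deg x"
    and "\<And>x. dbasis (h x) = frag_extend (frag_of \<circ> h) (dbasis x)"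
  shows "chain_map (frag_extend (frag_of \<circ> h))
           {f. Poly_Mapping.keys f \<subseteq> S} {f. Poly_Mapping.keys f \<subseteq> S'}"
proof -
  have "Poly_Mapping.keys (frag_extend (frag_of \<circ> h) f) \<subseteq> S'" if "Poly_Mapping.keys f \<subseteq> S" for f
    using keys_frag_extend_frag_of[of h f] assms(1) that by auto
  moreover have "homog n (frag_extend (frag_of \<circ> h) f)" if "homog n f" for n f
    using keys_frag_extend_frag_of[of h f] assms(2) that unfolding homog_def by auto
  moreover have "frag_extend (frag_of \<circ> h) (dd f) = dd (frag_extend (frag_of \<circ> h) f)" for f
    using assms(3) by (rule basis_map_dd)
  ultimately show ?thesis
    unfolding chain_map_def by (simp add: frag_extend_add)
qed

lemma subcomplex_image:
  assumes A: "subcomplex A B" and "F ` A \<subseteq> B"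
    and F_diff: "\<And>a b. F (a - b) = F a - F b" and F_dd: "\<And>f. F (dd f) = dd (F f)"
  shows "subcomplex (F ` A) B"
  unfolding subcomplex_def
proof (intro conjI ballI)
  have "F 0 = 0" using F_diff[of 0 0] by simp
  then show "0 \<in> F ` A" using A unfolding subcomplex_def by (metis image_eqI)
next
  fix f g assume "f \<in> F ` A" "g \<in> F ` A"
  then obtain a b where "a \<in> A" "b \<in> A" "f = F a" "g = F b" by blast
  then show "f - g \<in> F ` A" using A F_diff unfolding subcomplex_def by (metis image_eqI)
next
  fix f assume "f \<in> F ` A"
  then obtain a where "a \<in> A" "f = F a" by blast
  then show "dd f \<in> F ` A" using A F_dd unfolding subcomplex_def by (metis image_eqI)
qed (use assms(2) in simp)

lemma projection_complement:
  fixes P :: "'a::ab_group_add \<Rightarrow> 'a"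
  assumes P_diff: "\<And>a b. P (a - b) = P a - P b" and "P ` A \<subseteq> S"
    and P_id: "\<And>s. s \<in> S \<Longrightarrow> P s = s" and "0 \<in> A" "0 \<in> S"
  shows "S \<inter> (\<lambda>c. c - P c) ` A = {0}"
proof -
  have "c - P c = 0" if "c \<in> A" "c - P c \<in> S" for c
  proof -
    have "P c \<in> S" using that assms(2) by blast
    then have "P (c - P c) = 0" by (simp add: P_diff P_id)
    then show ?thesis using P_id that(2) by simp
  qed
  moreover have "P 0 = 0" using P_diff[of 0 0] by simp
  ultimately show ?thesis using assms(4,5) by (auto intro: image_eqI[of 0 _ 0])
qed

section \<open>Contraction of a boundary segment\<close>

fun walk :: "pt set set \<Rightarrow> nat list \<Rightarrow> pt \<Rightarrow> seg list \<Rightarrow> pt \<Rightarrow> bool" where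
  "walk C ks p [] q = samecomp C p q"
| "walk C ks p (s # g) q = (samecomp C p (seg_src ks s) \<and> walk C ks (seg_tgt ks s) g q)"

definition seg_in_range :: "nat list \<Rightarrow> seg \<Rightarrow> bool" where
  "seg_in_range ks s = (case s of (w, m, fw) \<Rightarrow> w < length ks \<and> m < ks ! w)"

abbreviation reduced :: "seg list \<Rightarrow> bool" where
  "reduced \<equiv> successively (\<lambda>s t. t \<noteq> seg_inv s)"

lemma samecomp_trans:
  "pairwise disjnt C \<Longrightarrow> samecomp C p q \<Longrightarrow> samecomp C q r \<Longrightarrow> samecomp C p r"
  unfolding pairwise_def disjnt_def samecomp_def by blast

lemma walk_conv:
  "walk C ks p g q \<longleftrightarrow>
     (if g = [] then samecomp C p q
      else samecomp C p (seg_src ks (hd g)) \<and> samecomp C (seg_tgt ks (last g)) q \<and>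
        successively (\<lambda>s t. samecomp C (seg_tgt ks s) (seg_src ks t)) g)"
  by (induction g arbitrary: p) (auto simp: successively_Cons)

lemma walk_samecomp_trans:
  "pairwise disjnt C \<Longrightarrow> samecomp C p q \<Longrightarrow> walk C ks q g r \<Longrightarrow> walk C ks p g r"
  by (cases g) (auto intro: samecomp_trans)

lemma seg_src_inv [simp]: "seg_src ks (seg_inv s) = seg_tgt ks s"
  and seg_tgt_inv [simp]: "seg_tgt ks (seg_inv s) = seg_src ks s"
  by (cases s; auto simp: seg_src_def seg_tgt_def seg_inv_def)+

lemma freduce_Nil [simp]: "freduce [] = []"
  by (simp add: freduce_def)

lemma freduce_Cons:
  "freduce (s # g) = (case freduce g of [] \<Rightarrow> [s] | t # r \<Rightarrow> if t = seg_inv s then r else s # t # r)"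
  by (simp add: freduce_def split: list.split)

lemma set_freduce: "set (freduce g) \<subseteq> set g"
  by (induction g) (auto simp: freduce_Cons split: list.split)

lemma reduced_freduce: "reduced (freduce g)"
  by (induction g) (auto simp: freduce_Cons successively_Cons split: list.split)

lemma walk_freduce: "pairwise disjnt C \<Longrightarrow> walk C ks p g q \<Longrightarrow> walk C ks p (freduce g) q"
proof (induction g arbitrary: p)
  case (Cons s g)
  then have src: "samecomp C p (seg_src ks s)" and rest: "walk C ks (seg_tgt ks s) (freduce g) q"
    by auto
  show ?case
  proof (cases "freduce g")
    case (Cons t r)
    show ?thesis
    proof (cases "t = seg_inv s")
      case True
      then have "walk C ks (seg_src ks s) r q" using rest Cons by simp
      then show ?thesis
        using True Cons src walk_samecomp_trans[OF \<open>pairwise disjnt C\<close>] by (simp add: freduce_Cons)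
    qed (use src rest Cons in \<open>simp add: freduce_Cons\<close>)
  qed (use src rest in \<open>simp add: freduce_Cons\<close>)
qed simp

lemma valid_loop_iff:
  assumes "samecomp C (Leaf j) (Leaf j)"
  shows "valid_loop ks C j g \<longleftrightarrow>
    (\<forall>s\<in>set g. seg_in_range ks s) \<and> walk C ks (Leaf j) g (Leaf j) \<and> reduced g"
  unfolding valid_loop_def walk_conv successively_conv_nth seg_in_range_def
  using assms by auto

lemma Suc_mod_if: "m < k \<Longrightarrow> Suc m mod k = (if Suc m = k then 0 else Suc m)"
  by auto

lemma new_idx_less: "2 \<le> k \<Longrightarrow> i < k \<Longrightarrow> m < k \<Longrightarrow> new_idx k i m < k - 1"
  unfolding new_idx_def by auto

lemma new_idx_surj:
  assumes "i < k" "m' < k - 1"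
  shows "\<exists>m<k. new_idx k i m = m'"
proof (cases "m' \<le> i")
  case True
  then show ?thesis using assms by (intro exI[of _ m']) (auto simp: new_idx_def)
next
  case False
  then show ?thesis using assms by (intro exI[of _ "Suc m'"]) (auto simp: new_idx_def)
qed

lemma new_idx_eq_imp:
  "2 \<le> k \<Longrightarrow> i < k \<Longrightarrow> m < k \<Longrightarrow> m' < k \<Longrightarrow>
   new_idx k i m = new_idx k i m' \<Longrightarrow> m \<noteq> m' \<Longrightarrow>
   m \<in> {i, Suc i mod k} \<and> m' \<in> {i, Suc i mod k}"
  unfolding new_idx_def by (auto simp: Suc_mod_if split: if_splits)

lemma new_idx_merge: "2 \<le> k \<Longrightarrow> i < k \<Longrightarrow> new_idx k i i = new_idx k i (Suc i mod k)"
  unfolding new_idx_def by (auto simp: Suc_mod_if)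

lemma new_idx_segment:
  "2 \<le> k \<Longrightarrow> i < k \<Longrightarrow> m < k \<Longrightarrow> m \<noteq> i \<Longrightarrow>
   new_idx k i m = (if i < m then m - 1 else m) \<and>
   new_idx k i (Suc m mod k) = Suc (if i < m then m - 1 else m) mod (k - 1)"
  unfolding new_idx_def by (auto simp: Suc_mod_if)

lemma HE_in_points [simp]: "HE w m \<in> points n1 m1 m2 ks \<longleftrightarrow> w < length ks \<and> m < ks ! w"
  by (auto simp: points_def)

lemma Leaf_in_points [simp]: "Leaf l \<in> points n1 m1 m2 ks \<longleftrightarrow> 1 \<le> l \<and> l \<le> n1 + m1 + m2"
  by (auto simp: points_def)

lemma finite_points: "finite (points n1 m1 m2 ks)"
proof -
  have "{HE v i |v i. v < length ks \<and> i < ks ! v} = (\<lambda>(v, i). HE v i) ` (SIGMA v:{..<length ks}. {..<ks ! v})"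
    by auto
  moreover have "{Leaf l |l. 1 \<le> l \<and> l \<le> n1 + m1 + m2} = Leaf ` {1..n1 + m1 + m2}" by auto
  ultimately show ?thesis unfolding points_def by simp
qed

definition shift_seg :: "nat \<Rightarrow> nat \<Rightarrow> seg \<Rightarrow> seg" where
  "shift_seg v i s = (case s of (w, m, fw) \<Rightarrow> if w = v \<and> i < m then (w, m - 1, fw) else (w, m, fw))"

lemma del_seg_Nil [simp]: "del_seg v i [] = []"
  by (simp add: del_seg_def)

lemma del_seg_Cons:
  "del_seg v i (s # g) =
   (if fst s = v \<and> fst (snd s) = i then del_seg v i g else shift_seg v i s # del_seg v i g)"
  by (cases s) (simp add: del_seg_def shift_seg_def)

locale contraction =
  fixes n1 m1 n2 m2 :: nat and x :: ldiag and v i :: nat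
  assumes valid: "x \<in> valid_ld n1 m1 n2 m2" and v_less: "v < length (wv x)" and i_less: "i < wv x ! v"
    and nondegenerate: "\<not> samecomp (comps x) (HE v i) (HE v (Suc i mod (wv x ! v)))"
begin

abbreviation "ks \<equiv> wv x"
abbreviation "cs \<equiv> comps x"
abbreviation "kv \<equiv> ks ! v"
abbreviation "ha \<equiv> HE v i"
abbreviation "hb \<equiv> HE v (Suc i mod kv)"
abbreviation "ren \<equiv> ren_pt kv v i"
abbreviation "ks' \<equiv> ks[v := kv - 1]"
abbreviation "pts \<equiv> points n1 m1 m2 ks"
abbreviation "pts' \<equiv> points n1 m1 m2 ks'"
abbreviation "merged \<equiv> {B\<in>cs. ha \<in> B \<or> hb \<in> B}"
abbreviation "blocks \<equiv> (cs - merged) \<union> {\<Union>merged}"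
abbreviation "cs' \<equiv> contract_comps ks cs v i"

lemma length_ks: "length ks = n2"
  and ks_pos: "\<And>w. w < n2 \<Longrightarrow> 1 \<le> ks ! w"
  and Union_cs: "\<Union>cs = pts"
  and disjoint_cs: "pairwise disjnt cs"
  and block_cs: "\<And>B. B \<in> cs \<Longrightarrow> 2 \<le> card B \<and> (\<exists>v i. HE v i \<in> B)"
  and connected_cs: "\<And>w w'. w < n2 \<Longrightarrow> w' < n2 \<Longrightarrow> (w, w') \<in> (wconn cs)\<^sup>*"
  using valid unfolding valid_ld_def valid_diag_def pairwise_def disjnt_def by auto

lemma ha_in_pts: "ha \<in> pts"
  using v_less i_less by simp

lemma two_le_kv: "2 \<le> kv"
proof (rule ccontr)
  assume "\<not> 2 \<le> kv"
  moreover have "1 \<le> kv" using ks_pos v_less length_ks by auto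
  ultimately have "kv = 1" by simp
  then have "hb = ha" using i_less by simp
  moreover obtain B where "B \<in> cs" "ha \<in> B" using ha_in_pts Union_cs by blast
  ultimately show False using nondegenerate unfolding samecomp_def by auto
qed

lemma hb_in_pts: "hb \<in> pts"
  using v_less two_le_kv by simp

lemma ren_HE: "ren (HE w m) = (if w = v then HE v (new_idx kv i m) else HE w m)"
  and ren_Leaf [simp]: "ren (Leaf l) = Leaf l"
  by (simp_all add: ren_pt_def)

lemma ren_ha_hb: "ren ha = ren hb"
  using new_idx_merge[OF two_le_kv i_less] by (simp add: ren_HE)

lemma ren_pts: "ren ` pts = pts'"
proof
  show "ren ` pts \<subseteq> pts'"
  proof
    fix p assume "p \<in> ren ` pts"
    then obtain q where "q \<in> pts" "p = ren q" by auto
    then show "p \<in> pts'"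
      using new_idx_less[OF two_le_kv i_less] by (cases q) (auto simp: ren_HE nth_list_update v_less)
  qed
next
  show "pts' \<subseteq> ren ` pts"
  proof
    fix p assume p: "p \<in> pts'"
    show "p \<in> ren ` pts"
    proof (cases p)
      case (HE w m')
      show ?thesis
      proof (cases "w = v")
        case True
        then have "m' < kv - 1" using p HE by (simp add: nth_list_update v_less)
        then obtain m where "m < kv" "new_idx kv i m = m'" using new_idx_surj[OF i_less] by blast
        then show ?thesis using HE True v_less by (intro image_eqI[of _ _ "HE v m"]) (auto simp: ren_HE)
      next
        case False
        then show ?thesis using HE p by (intro image_eqI[of _ _ "HE w m'"]) (auto simp: ren_HE nth_list_update v_less)
      qed
    next
      case (Leaf l)
      then show ?thesis using p by (intro image_eqI[of _ _ "Leaf l"]) auto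
    qed
  qed
qed

lemma ren_eq_imp:
  assumes "p \<in> pts" "q \<in> pts" "ren p = ren q" "p \<noteq> q"
  shows "p \<in> {ha, hb} \<and> q \<in> {ha, hb}"
proof (cases p; cases q)
  fix w m w' m' assume p: "p = HE w m" and q: "q = HE w' m'"
  then have "w = w'" using assms by (auto simp: ren_HE split: if_splits)
  show ?thesis
  proof (cases "w = v")
    case True
    then have "m < kv" "m' < kv" "new_idx kv i m = new_idx kv i m'" "m \<noteq> m'"
      using assms p q \<open>w = w'\<close> by (auto simp: ren_HE)
    from new_idx_eq_imp[OF two_le_kv i_less this] show ?thesis using p q True \<open>w = w'\<close> by auto
  qed (use assms p q \<open>w = w'\<close> in \<open>auto simp: ren_HE\<close>)
qed (use assms in \<open>auto simp: ren_HE split: if_splits\<close>)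

lemma inj_on_ren: "B \<subseteq> pts \<Longrightarrow> hb \<notin> B \<Longrightarrow> inj_on ren B"
proof (rule inj_onI, rule ccontr)
  fix p q assume "B \<subseteq> pts" "hb \<notin> B" "p \<in> B" "q \<in> B" "ren p = ren q" "p \<noteq> q"
  then show False using ren_eq_imp[of p q] by auto
qed

lemma cs'_eq: "cs' = (\<lambda>B. ren ` B) ` blocks"
  by (simp add: contract_comps_def Let_def)

lemma Union_blocks: "\<Union>blocks = pts"
proof -
  have "\<Union>cs \<subseteq> \<Union>blocks"
  proof
    fix z assume "z \<in> \<Union>cs"
    then obtain B where "B \<in> cs" "z \<in> B" by auto
    then show "z \<in> \<Union>blocks" by (cases "B \<in> merged") auto
  qed
  then have "\<Union>blocks = \<Union>cs" by auto
  then show ?thesis using Union_cs by simp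
qed

lemma block_subset_blocks: "B \<in> cs \<Longrightarrow> \<exists>B0\<in>blocks. B \<subseteq> B0"
  by (cases "B \<in> merged") auto

lemma image_block_subset: "B \<in> cs \<Longrightarrow> \<exists>B'\<in>cs'. ren ` B \<subseteq> B'"
proof -
  assume "B \<in> cs"
  then obtain B0 where "B0 \<in> blocks" "B \<subseteq> B0" using block_subset_blocks by blast
  then show ?thesis unfolding cs'_eq by (intro bexI[of _ "ren ` B0"]) auto
qed

lemma disjoint_cs': "pairwise disjnt cs'"
  unfolding pairwise_def disjnt_def cs'_eq
proof (intro ballI impI)
  fix B1' B2'
  assume "B1' \<in> (\<lambda>B. ren ` B) ` blocks" "B2' \<in> (\<lambda>B. ren ` B) ` blocks" and ne: "B1' \<noteq> B2'"
  then obtain B1 B2 where B: "B1 \<in> blocks" "B2 \<in> blocks" "B1' = ren ` B1" "B2' = ren ` B2" by auto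
  then have ne': "B1 \<noteq> B2" using ne by auto
  show "B1' \<inter> B2' = {}"
  proof (rule ccontr)
    assume "B1' \<inter> B2' \<noteq> {}"
    then obtain y1 y2 where y: "y1 \<in> B1" "y2 \<in> B2" "ren y1 = ren y2" using B by auto
    have "B1 \<inter> B2 = {}" using disjoint_cs B ne' unfolding pairwise_def disjnt_def by blast
    then have "y1 \<noteq> y2" using y by auto
    moreover have "y1 \<in> pts" "y2 \<in> pts" using y B Union_blocks by auto
    ultimately have "y1 \<in> {ha, hb}" "y2 \<in> {ha, hb}" using ren_eq_imp y(3) by blast+
    then have "B1 = \<Union>merged" "B2 = \<Union>merged" using B y by auto
    then show False using ne' by simp
  qed
qed

lemma Union_cs': "\<Union>cs' = pts'"
  using Union_blocks ren_pts unfolding cs'_eq image_Union[symmetric] by simp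

lemma block_cs':
  assumes "B' \<in> cs'"
  shows "2 \<le> card B' \<and> (\<exists>v i. HE v i \<in> B')"
proof -
  obtain B where B: "B \<in> blocks" "B' = ren ` B" using assms unfolding cs'_eq by auto
  show ?thesis
  proof (cases "B \<in> cs - merged")
    case True
    then have B_cs: "B \<in> cs" and "hb \<notin> B" by auto
    moreover have "B \<subseteq> pts" using B_cs Union_cs by auto
    ultimately have "inj_on ren B" using inj_on_ren by simp
    then have "card B' = card B" using B(2) by (simp add: card_image)
    moreover obtain w m where wm: "HE w m \<in> B" using block_cs[OF B_cs] by blast
    moreover have "ren (HE w m) \<in> B'" using B(2) wm by blast
    ultimately show ?thesis using block_cs[OF B_cs] by (metis ren_HE)
  next
    case False
    then have B_merged: "B = \<Union>merged" using B by auto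
    obtain Ba where Ba: "Ba \<in> cs" "ha \<in> Ba" using ha_in_pts Union_cs by blast
    obtain Bb where Bb: "Bb \<in> cs" "hb \<in> Bb" using hb_in_pts Union_cs by blast
    have "Ba \<noteq> Bb" using nondegenerate Ba Bb unfolding samecomp_def by auto
    then have "Ba \<inter> Bb = {}" using disjoint_cs Ba Bb unfolding pairwise_def disjnt_def by blast
    then have "hb \<notin> Ba" using Bb by auto
    moreover have "Ba \<subseteq> pts" using Ba Union_cs by auto
    ultimately have "inj_on ren Ba" using inj_on_ren by simp
    then have "card (ren ` Ba) = card Ba" by (simp add: card_image)
    moreover have sub: "ren ` Ba \<subseteq> B'" using B_merged B(2) Ba by auto
    moreover have "finite B'"
    proof -
      have "B \<subseteq> pts" using B(1) Union_blocks by auto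
      then show ?thesis using B(2) finite_points finite_subset by blast
    qed
    ultimately have "2 \<le> card B'" using block_cs[OF Ba(1)] card_mono[of B' "ren ` Ba"] by simp
    moreover have "ren ha \<in> B'" using sub Ba by auto
    moreover have "ren ha = HE v (new_idx kv i i)" by (simp add: ren_HE)
    ultimately show ?thesis by metis
  qed
qed

lemma ren_HE_vertex: "\<exists>m'. ren (HE w m) = HE w m'"
  by (simp add: ren_HE)

lemma samecomp_ren: "samecomp cs p q \<Longrightarrow> samecomp cs' (ren p) (ren q)"
proof -
  assume "samecomp cs p q"
  then obtain B where "B \<in> cs" "p \<in> B" "q \<in> B" unfolding samecomp_def by blast
  moreover obtain B' where "B' \<in> cs'" "ren ` B \<subseteq> B'"
    using image_block_subset[OF \<open>B \<in> cs\<close>] by blast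
  ultimately show ?thesis unfolding samecomp_def by blast
qed

lemma wconn_subset: "wconn cs \<subseteq> wconn cs'"
proof
  fix e assume "e \<in> wconn cs"
  then obtain w w' B c d where e: "e = (w, w')" "B \<in> cs" "HE w c \<in> B" "HE w' d \<in> B"
    unfolding wconn_def by blast
  obtain B' where B': "B' \<in> cs'" "ren ` B \<subseteq> B'" using image_block_subset[OF e(2)] by blast
  obtain c' d' where "ren (HE w c) = HE w c'" "ren (HE w' d) = HE w' d'" using ren_HE_vertex by metis
  then have "HE w c' \<in> B'" "HE w' d' \<in> B'" using e(3,4) B'(2) by (metis image_subset_iff)+
  then show "e \<in> wconn cs'" unfolding wconn_def e using B'(1) by blast
qed

lemma valid_diag_contract: "valid_diag n1 m1 n2 m2 ks' cs'"
  unfolding valid_diag_def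
proof (intro conjI allI impI ballI)
  show "length ks' = n2" using length_ks by simp
next
  fix w assume "w < n2"
  then show "1 \<le> ks' ! w" using ks_pos two_le_kv by (auto simp: nth_list_update v_less)
next
  show "\<Union>cs' = pts'" by (rule Union_cs')
next
  fix B B' assume "B \<in> cs'" "B' \<in> cs'" "B \<noteq> B'"
  then show "B \<inter> B' = {}" using disjoint_cs' unfolding pairwise_def disjnt_def by blast
next
  fix B assume "B \<in> cs'"
  then show "2 \<le> card B" "\<exists>v i. HE v i \<in> B" using block_cs' by blast+
next
  fix w w' assume "w < n2" "w' < n2"
  then show "(w, w') \<in> (wconn cs')\<^sup>*" using connected_cs rtrancl_mono[OF wconn_subset] by blast
qed

lemma shift_seg_ends:
  assumes "seg_in_range ks s" "\<not> (fst s = v \<and> fst (snd s) = i)"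
  shows "seg_src ks' (shift_seg v i s) = ren (seg_src ks s) \<and> seg_tgt ks' (shift_seg v i s) = ren (seg_tgt ks s)"
proof (cases s)
  case (fields w m fw)
  show ?thesis
  proof (cases "w = v")
    case True
    then have "m < kv" "m \<noteq> i" using assms fields by (auto simp: seg_in_range_def)
    from new_idx_segment[OF two_le_kv i_less this] show ?thesis using True fields
      by (auto simp: shift_seg_def seg_src_def seg_tgt_def ren_HE nth_list_update v_less)
  next
    case False
    then show ?thesis
      using fields by (auto simp: shift_seg_def seg_src_def seg_tgt_def ren_HE nth_list_update v_less)
  qed
qed

lemma contracted_seg_ends:
  "fst s = v \<Longrightarrow> fst (snd s) = i \<Longrightarrow> ren (seg_src ks s) = ren (seg_tgt ks s)"
  using ren_ha_hb by (cases s) (auto simp: seg_src_def seg_tgt_def)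

lemma seg_in_range_del_seg:
  "\<forall>s\<in>set g. seg_in_range ks s \<Longrightarrow> \<forall>s\<in>set (del_seg v i g). seg_in_range ks' s"
proof (induction g)
  case (Cons s g)
  have "seg_in_range ks' (shift_seg v i s)" if "\<not> (fst s = v \<and> fst (snd s) = i)"
    using Cons.prems that i_less v_less
    by (cases s) (auto simp: seg_in_range_def shift_seg_def nth_list_update)
  then show ?case using Cons by (auto simp: del_seg_Cons)
qed simp

lemma walk_del_seg:
  "\<forall>s\<in>set g. seg_in_range ks s \<Longrightarrow> walk cs ks p g q \<Longrightarrow>
   walk cs' ks' (ren p) (del_seg v i g) (ren q)"
proof (induction g arbitrary: p)
  case (Cons s g)
  then have range: "seg_in_range ks s" and src: "samecomp cs p (seg_src ks s)"
    and rest: "walk cs' ks' (ren (seg_tgt ks s)) (del_seg v i g) (ren q)"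
    by auto
  show ?case
  proof (cases "fst s = v \<and> fst (snd s) = i")
    case True
    then have "samecomp cs' (ren p) (ren (seg_tgt ks s))"
      using samecomp_ren[OF src] contracted_seg_ends by simp
    then show ?thesis using walk_samecomp_trans[OF disjoint_cs' _ rest] True by (simp add: del_seg_Cons)
  next
    case False
    then have "del_seg v i (s # g) = shift_seg v i s # del_seg v i g" by (simp add: del_seg_Cons)
    then show ?thesis using shift_seg_ends[OF range False] samecomp_ren[OF src] rest by simp
  qed
qed (simp add: samecomp_ren)

lemma valid_loop_contract:
  assumes j: "j \<in> {1..n1}" and loop: "valid_loop ks cs j g"
  shows "valid_loop ks' cs' j (freduce (del_seg v i g))"
proof -
  have "Leaf j \<in> pts" "Leaf j \<in> pts'" using j by auto
  then have leaf: "samecomp cs (Leaf j) (Leaf j)" and leaf': "samecomp cs' (Leaf j) (Leaf j)"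
    using Union_cs Union_cs' unfolding samecomp_def by blast+
  from loop have range: "\<forall>s\<in>set g. seg_in_range ks s" and "walk cs ks (Leaf j) g (Leaf j)"
    using valid_loop_iff[OF leaf] by auto
  then have "walk cs' ks' (Leaf j) (del_seg v i g) (Leaf j)" using walk_del_seg by fastforce
  then have "walk cs' ks' (Leaf j) (freduce (del_seg v i g)) (Leaf j)"
    by (rule walk_freduce[OF disjoint_cs'])
  moreover have "\<forall>s\<in>set (freduce (del_seg v i g)). seg_in_range ks' s"
    using seg_in_range_del_seg[OF range] set_freduce by blast
  ultimately show ?thesis using valid_loop_iff[OF leaf'] reduced_freduce by blast
qed

lemma contract_valid: "contract x v i \<in> valid_ld n1 m1 n2 m2"
  using valid valid_diag_contract valid_loop_contract unfolding valid_ld_def contract_def by auto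

end

lemma contract_valid:
  "x \<in> valid_ld n1 m1 n2 m2 \<Longrightarrow> v < length (wv x) \<Longrightarrow> i < wv x ! v \<Longrightarrow>
   \<not> samecomp (comps x) (HE v i) (HE v (Suc i mod (wv x ! v))) \<Longrightarrow> contract x v i \<in> valid_ld n1 m1 n2 m2"
  by (rule contraction.contract_valid) unfold_locales

section \<open>The maps p_T and p_cst\<close>

definition clear_loops :: "nat set \<Rightarrow> seg list list \<Rightarrow> seg list list" where
  "clear_loops T gs = map (\<lambda>k. if Suc k \<in> T then [] else gs ! k) [0..<length gs]"

definition pT_basis :: "nat set \<Rightarrow> ldiag \<Rightarrow> ldiag" where
  "pT_basis T x = LDiag (wv x) (comps x) (clear_loops T (loops x))"

lemma length_clear_loops [simp]: "length (clear_loops T gs) = length gs"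
  by (simp add: clear_loops_def)

lemma nth_clear_loops: "k < length gs \<Longrightarrow> clear_loops T gs ! k = (if Suc k \<in> T then [] else gs ! k)"
  by (simp add: clear_loops_def)

lemma clear_loops_empty [simp]: "clear_loops {} gs = gs"
  by (simp add: clear_loops_def map_nth)

lemma clear_loops_update: "0 < j \<Longrightarrow> (clear_loops T gs)[j - 1 := []] = clear_loops (insert j T) gs"
  by (rule nth_equalityI) (auto simp: nth_clear_loops nth_list_update)

lemma map_clear_loops: "h [] = [] \<Longrightarrow> map h (clear_loops T gs) = clear_loops T (map h gs)"
  by (rule nth_equalityI) (auto simp: nth_clear_loops)

lemma pT_basis_sel [simp]:
  "wv (pT_basis T x) = wv x" "comps (pT_basis T x) = comps x"
  "loops (pT_basis T x) = clear_loops T (loops x)"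
  by (simp_all add: pT_basis_def)

lemma pT_basis_empty [simp]: "pT_basis {} x = x"
  by (simp add: pT_basis_def)

lemma deg_pT_basis [simp]: "deg (pT_basis T x) = deg x"
  by (simp add: deg_def)

lemma p_basis_pT_basis: "0 < j \<Longrightarrow> p_basis j (pT_basis T x) = pT_basis (insert j T) x"
  using clear_loops_update[of j T "loops x"] by (simp add: p_basis_def pT_basis_def)

lemma pT_basis_insert_cst:
  assumes "0 < j" "loops x ! (j - 1) = []"
  shows "pT_basis (insert j T) x = pT_basis T x"
  unfolding pT_basis_def using assms by (auto intro!: nth_equalityI simp: nth_clear_loops)

lemma pT_basis_cst:
  assumes "j \<in> T" "T \<subseteq> {1..length (loops x)}"
  shows "loops (pT_basis T x) ! (j - 1) = []"
proof -
  have "j \<in> {1..length (loops x)}" using assms by blast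
  then have "j - 1 < length (loops x)" "Suc (j - 1) = j" by auto
  then show ?thesis using assms(1) by (simp add: nth_clear_loops)
qed

lemma pT_basis_valid:
  assumes x: "x \<in> valid_ld n1 m1 n2 m2"
  shows "pT_basis T x \<in> valid_ld n1 m1 n2 m2"
proof -
  have "valid_loop (wv x) (comps x) j (clear_loops T (loops x) ! (j - 1))" if j: "j \<in> {1..n1}" for j
  proof -
    have "j - 1 < length (loops x)" "Suc (j - 1) = j" using j x by (auto simp: valid_ld_def)
    then show ?thesis
      using x j by (auto simp: nth_clear_loops valid_ld_def valid_loop_def)
  qed
  then show ?thesis using x by (simp add: valid_ld_def)
qed

text \<open>Label 0 is excluded since p_basis 0 clears loop 1 (as 0 - 1 = 0 in nat).\<close>

lemma pj_eq: "0 < j \<Longrightarrow> pj j = frag_extend (frag_of \<circ> pT_basis {j})"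
  using p_basis_pT_basis[of j "{}"] by (simp add: pj_def comp_def)

lemma fold_pj:
  "0 \<notin> set ts \<Longrightarrow>
   fold (\<lambda>t g. pj t \<circ> g) ts (frag_extend (frag_of \<circ> pT_basis S))
     = frag_extend (frag_of \<circ> pT_basis (S \<union> set ts))"
proof (induction ts arbitrary: S)
  case (Cons t ts)
  then have "0 < t" by auto
  then have "pj t \<circ> frag_extend (frag_of \<circ> pT_basis S) = frag_extend (frag_of \<circ> pT_basis (insert t S))"
    by (simp add: fun_eq_iff pj_def frag_extend_frag_extend p_basis_pT_basis comp_def)
  then have "fold (\<lambda>t g. pj t \<circ> g) (t # ts) (frag_extend (frag_of \<circ> pT_basis S))
      = fold (\<lambda>t g. pj t \<circ> g) ts (frag_extend (frag_of \<circ> pT_basis (insert t S)))"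
    by (simp only: fold_Cons comp_apply)
  also have "\<dots> = frag_extend (frag_of \<circ> pT_basis (insert t S \<union> set ts))"
    by (rule Cons.IH) (use Cons.prems in simp)
  also have "insert t S \<union> set ts = S \<union> set (t # ts)" by auto
  finally show ?case .
qed simp

lemma pT_eq: "finite T \<Longrightarrow> 0 \<notin> T \<Longrightarrow> pT T = frag_extend (frag_of \<circ> pT_basis T)"
proof -
  assume "finite T" "0 \<notin> T"
  moreover have "id = frag_extend (frag_of \<circ> pT_basis {})"
    by (simp add: fun_eq_iff comp_def flip: frag_expansion)
  ultimately show ?thesis
    unfolding pT_def using fold_pj[of "sorted_list_of_set T" "{}"] by simp
qed

lemma contract_pT_basis: "contract (pT_basis T x) v i = pT_basis T (contract x v i)"
  by (simp add: contract_def pT_basis_def map_clear_loops)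

lemma dbasis_pT_basis: "dbasis (pT_basis T x) = frag_extend (frag_of \<circ> pT_basis T) (dbasis x)"
  by (rule dbasis_basis_map) (simp_all add: contract_pT_basis)

lemma pcst_eq:
  "pcst n1 f = (\<Sum>k\<in>{1..n1}. \<Sum>T\<in>{T. T \<subseteq> {1..n1} \<and> card T = k}.
      frag_cmul ((-1) ^ (k + 1)) (frag_extend (frag_of \<circ> pT_basis T) f))"
  unfolding pcst_def
proof (intro sum.cong refl)
  fix k T assume "T \<in> {T. T \<subseteq> {1..n1} \<and> card T = k}"
  then have "finite T" "0 \<notin> T" by (auto intro: finite_subset)
  then show "frag_cmul ((-1) ^ (k + 1)) (pT T f) = frag_cmul ((-1) ^ (k + 1)) (frag_extend (frag_of \<circ> pT_basis T) f)"
    by (simp add: pT_eq)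
qed

lemma pcst_diff: "pcst n1 (a - b) = pcst n1 a - pcst n1 b"
  by (simp add: pcst_eq frag_extend_diff frag_cmul_diff_distrib2 sum_subtractf)

lemma pcst_add: "pcst n1 (a + b) = pcst n1 a + pcst n1 b"
  by (simp add: pcst_eq frag_extend_add frag_cmul_distrib2 sum.distrib)

lemma pcst_dd: "pcst n1 (dd f) = dd (pcst n1 f)"
  by (simp add: pcst_eq dd_sum dd_cmul basis_map_dd[OF dbasis_pT_basis])

lemma pcst_frag_extend: "pcst n1 f = frag_extend (\<lambda>x. pcst n1 (frag_of x)) f"
  by (rule additive_eq_frag_extend) (rule pcst_diff)

lemma keys_pcst:
  "Poly_Mapping.keys (pcst n1 f)
     \<subseteq> (\<Union>x\<in>Poly_Mapping.keys f. {pT_basis T x |T. T \<subseteq> {1..n1} \<and> T \<noteq> {}})"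
proof -
  have "Poly_Mapping.keys (pcst n1 (frag_of x)) \<subseteq> {pT_basis T x |T. T \<subseteq> {1..n1} \<and> T \<noteq> {}}" for x
    unfolding pcst_eq
    by (intro order_trans[OF keys_sum] UN_least order_trans[OF keys_cmul]) (auto simp: Suc_le_eq)
  then show ?thesis
    using keys_frag_extend[of "\<lambda>x. pcst n1 (frag_of x)" f] pcst_frag_extend[of n1 f]
    by (metis (no_types, lifting) UN_mono order.trans order_refl)
qed

lemma pcst_frag_of_cst:
  assumes j: "j \<in> {1..n1}" and cst: "loops x ! (j - 1) = []"
  shows "pcst n1 (frag_of x) = frag_of x"
proof -
  define A where "A = {1..n1}"
  define g where "g T = frag_of (pT_basis T x)" for T
  have fA: "finite A" by (simp add: A_def)
  have "pcst n1 (frag_of x)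
      = (\<Sum>k\<in>A. \<Sum>T\<in>{T \<in> Pow A - {{}}. card T = k}. frag_cmul ((-1) ^ (card T + 1)) (g T))"
    unfolding pcst_eq A_def g_def by (intro sum.cong) auto
  also have "\<dots> = (\<Sum>T\<in>Pow A - {{}}. frag_cmul ((-1) ^ (card T + 1)) (g T))"
  proof (rule sum.group)
    show "card ` (Pow A - {{}}) \<subseteq> A"
      using fA
      by (auto simp: A_def Suc_le_eq card_gt_0_iff finite_subset
          intro: card_mono[of "{1..n1}", simplified])
  qed (use fA in auto)
  also have "\<dots> = - (\<Sum>T\<in>Pow A - {{}}. frag_cmul ((-1) ^ card T) (g T))"
    by (simp add: sum_negf[symmetric])
  also have "(\<Sum>T\<in>Pow A - {{}}. frag_cmul ((-1) ^ card T) (g T)) = - g {}"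
  proof -
    have "(\<Sum>T\<in>Pow A. frag_cmul ((-1) ^ card T) (g T)) = 0"
      using fA j
      by (intro sum_Pow_alternating_eq_0) (auto simp: A_def g_def pT_basis_insert_cst[OF _ cst])
    moreover have "(\<Sum>T\<in>Pow A. frag_cmul ((-1) ^ card T) (g T))
        = g {} + (\<Sum>T\<in>Pow A - {{}}. frag_cmul ((-1) ^ card T) (g T))"
      using fA by (subst sum.remove[of _ "{}"]) auto
    ultimately show ?thesis by (simp add: add_eq_0_iff)
  qed
  finally show ?thesis by (simp add: g_def)
qed

section \<open>The subcomplexes\<close>

definition valid_ld_cst :: "nat \<Rightarrow> nat \<Rightarrow> nat \<Rightarrow> nat \<Rightarrow> ldiag set" where
  "valid_ld_cst n1 m1 n2 m2 = {x \<in> valid_ld n1 m1 n2 m2. \<exists>j\<in>{1..n1}. loops x ! (j - 1) = []}"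

lemma LDcst_eq: "LDcst n1 m1 n2 m2 = {f. Poly_Mapping.keys f \<subseteq> valid_ld_cst n1 m1 n2 m2}"
  by (simp add: LDcst_def valid_ld_cst_def)

lemma keys_dbasis:
  "Poly_Mapping.keys (dbasis x) \<subseteq> {contract x v i |v i. v < length (wv x) \<and> i < wv x ! v \<and>
      \<not> samecomp (comps x) (HE v i) (HE v (Suc i mod (wv x ! v)))}"
  unfolding dbasis_def
  by (intro order_trans[OF keys_sum] UN_least order_trans[OF keys_sum])
     (auto; blast)

lemma keys_dbasis_valid:
  assumes x: "x \<in> valid_ld n1 m1 n2 m2"
  shows "Poly_Mapping.keys (dbasis x) \<subseteq> valid_ld n1 m1 n2 m2"
proof
  fix y assume "y \<in> Poly_Mapping.keys (dbasis x)"
  then obtain v i where "y = contract x v i" "v < length (wv x)" "i < wv x ! v"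
    "\<not> samecomp (comps x) (HE v i) (HE v (Suc i mod (wv x ! v)))"
    using keys_dbasis[of x] by blast
  then show "y \<in> valid_ld n1 m1 n2 m2" using contract_valid[OF x] by simp
qed

lemma contract_cst:
  "j - 1 < length (loops x) \<Longrightarrow> loops x ! (j - 1) = [] \<Longrightarrow> loops (contract x v i) ! (j - 1) = []"
  by (simp add: contract_def)

lemma keys_dbasis_cst:
  assumes "x \<in> valid_ld_cst n1 m1 n2 m2"
  shows "Poly_Mapping.keys (dbasis x) \<subseteq> valid_ld_cst n1 m1 n2 m2"
proof -
  obtain j where j: "j \<in> {1..n1}" "loops x ! (j - 1) = []" and x: "x \<in> valid_ld n1 m1 n2 m2"
    using assms by (auto simp: valid_ld_cst_def)
  have "j - 1 < length (loops x)" using j x by (auto simp: valid_ld_def)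
  show ?thesis
  proof
    fix y assume "y \<in> Poly_Mapping.keys (dbasis x)"
    then obtain v i where y: "y = contract x v i" using keys_dbasis[of x] by blast
    have "y \<in> valid_ld n1 m1 n2 m2" using keys_dbasis_valid[OF x] \<open>y \<in> _\<close> by blast
    moreover have "loops y ! (j - 1) = []" using y contract_cst \<open>j - 1 < _\<close> j(2) by blast
    ultimately show "y \<in> valid_ld_cst n1 m1 n2 m2" using j(1) unfolding valid_ld_cst_def by blast
  qed
qed

lemma subcomplex_LD: "subcomplex (LD n1 m1 n2 m2) (LD n1 m1 n2 m2)"
  unfolding LD_def by (rule subcomplex_span) (auto dest: keys_dbasis_valid)

lemma subcomplex_LDcst: "subcomplex (LDcst n1 m1 n2 m2) (LD n1 m1 n2 m2)"
  unfolding LDcst_eq LD_def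
  by (rule subcomplex_span[OF _ keys_dbasis_cst]) (auto simp: valid_ld_cst_def)

lemma chain_map_pj: "j \<in> {1..n1} \<Longrightarrow> chain_map (pj j) (LD n1 m1 n2 m2) (LD n1 m1 n2 m2)"
  unfolding LD_def
  by (simp add: pj_eq chain_map_basis_map pT_basis_valid image_subsetI dbasis_pT_basis)

lemma pcst_in_LDcst: "f \<in> LD n1 m1 n2 m2 \<Longrightarrow> pcst n1 f \<in> LDcst n1 m1 n2 m2"
proof -
  assume f: "f \<in> LD n1 m1 n2 m2"
  have "y \<in> valid_ld_cst n1 m1 n2 m2" if y: "y \<in> Poly_Mapping.keys (pcst n1 f)" for y
  proof -
    have "y \<in> (\<Union>x\<in>Poly_Mapping.keys f. {pT_basis T x |T. T \<subseteq> {1..n1} \<and> T \<noteq> {}})"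
      using keys_pcst[of n1 f] y by (rule subsetD)
    then obtain x T where xT: "x \<in> Poly_Mapping.keys f" "y = pT_basis T x" "T \<subseteq> {1..n1}" "T \<noteq> {}"
      by blast
    then have x: "x \<in> valid_ld n1 m1 n2 m2" using f by (auto simp: LD_def)
    obtain j where j: "j \<in> T" using xT by blast
    have "y \<in> valid_ld n1 m1 n2 m2" using xT(2) pT_basis_valid[OF x] by simp
    moreover have "length (loops x) = n1" using x by (simp add: valid_ld_def)
    then have "loops y ! (j - 1) = []" using xT(2,3) j pT_basis_cst[of j T x] by simp
    moreover have "j \<in> {1..n1}" using xT(3) j by blast
    ultimately show ?thesis unfolding valid_ld_cst_def by blast
  qed
  then show ?thesis by (auto simp: LDcst_eq)
qed

lemma chain_map_pcst: "chain_map (pcst n1) (LD n1 m1 n2 m2) (LDcst n1 m1 n2 m2)"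
proof -
  have "homog n (pcst n1 f)" if "homog n f" for n f
    unfolding homog_def
  proof
    fix y assume "y \<in> Poly_Mapping.keys (pcst n1 f)"
    then have "y \<in> (\<Union>x\<in>Poly_Mapping.keys f. {pT_basis T x |T. T \<subseteq> {1..n1} \<and> T \<noteq> {}})"
      by (rule subsetD[OF keys_pcst])
    then show "deg y = n" using that unfolding homog_def by auto
  qed
  then show ?thesis
    unfolding chain_map_def by (simp add: pcst_in_LDcst pcst_add pcst_dd)
qed

lemma pcst_LDcst: "f \<in> LDcst n1 m1 n2 m2 \<Longrightarrow> pcst n1 f = f"
proof -
  assume f: "f \<in> LDcst n1 m1 n2 m2"
  have "pcst n1 f = frag_extend (\<lambda>x. pcst n1 (frag_of x)) f" by (rule pcst_frag_extend)
  also have "\<dots> = frag_extend frag_of f"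
  proof (rule frag_extend_eq)
    fix x assume "x \<in> Poly_Mapping.keys f"
    then obtain j where "j \<in> {1..n1}" "loops x ! (j - 1) = []"
      using f by (auto simp: LDcst_eq valid_ld_cst_def)
    then show "pcst n1 (frag_of x) = frag_of x" by (rule pcst_frag_of_cst)
  qed
  finally show ?thesis by (simp flip: frag_expansion)
qed

lemma LDpos_eq: "LDpos n1 m1 n2 m2 = (\<lambda>c. c - pcst n1 c) ` LD n1 m1 n2 m2"
proof -
  have "frag_extend (\<lambda>x. frag_of x - pcst n1 (frag_of x)) c = c - pcst n1 c" for c
    by (simp add: frag_extend_fun_diff flip: frag_expansion pcst_frag_extend)
  then show ?thesis by (auto simp: LDpos_def LD_def)
qed

theorem mainTheorem7:
  fixes n1 m1 n2 m2 :: nat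
  shows "(\<forall>j\<in>{1..n1}. chain_map (pj j) (LD n1 m1 n2 m2) (LD n1 m1 n2 m2))
     \<and> subcomplex (LDcst n1 m1 n2 m2) (LD n1 m1 n2 m2)
     \<and> chain_map (pcst n1) (LD n1 m1 n2 m2) (LDcst n1 m1 n2 m2)
     \<and> (\<forall>f\<in>LDcst n1 m1 n2 m2. pcst n1 f = f)
     \<and> subcomplex (LDpos n1 m1 n2 m2) (LD n1 m1 n2 m2)
     \<and> LDcst n1 m1 n2 m2 \<inter> LDpos n1 m1 n2 m2 = {0}
     \<and> (\<forall>f\<in>LD n1 m1 n2 m2. \<exists>a\<in>LDcst n1 m1 n2 m2. \<exists>b\<in>LDpos n1 m1 n2 m2. f = a + b)"
proof (intro conjI ballI)
  have LDcst_LD: "LDcst n1 m1 n2 m2 \<subseteq> LD n1 m1 n2 m2"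
    using subcomplex_LDcst unfolding subcomplex_def by blast
  have complement_in_LD: "(\<lambda>c. c - pcst n1 c) ` LD n1 m1 n2 m2 \<subseteq> LD n1 m1 n2 m2"
    using subcomplex_LD pcst_in_LDcst LDcst_LD unfolding subcomplex_def by blast
  show "chain_map (pj j) (LD n1 m1 n2 m2) (LD n1 m1 n2 m2)" if "j \<in> {1..n1}" for j
    using that by (rule chain_map_pj)
  show "subcomplex (LDcst n1 m1 n2 m2) (LD n1 m1 n2 m2)" by (rule subcomplex_LDcst)
  show "chain_map (pcst n1) (LD n1 m1 n2 m2) (LDcst n1 m1 n2 m2)" by (rule chain_map_pcst)
  show "pcst n1 f = f" if "f \<in> LDcst n1 m1 n2 m2" for f using that by (rule pcst_LDcst)
  show "subcomplex (LDpos n1 m1 n2 m2) (LD n1 m1 n2 m2)"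
    unfolding LDpos_eq
    by (rule subcomplex_image[OF subcomplex_LD complement_in_LD]) (simp_all add: pcst_diff pcst_dd dd_diff)
  show "LDcst n1 m1 n2 m2 \<inter> LDpos n1 m1 n2 m2 = {0}"
    unfolding LDpos_eq
    using pcst_in_LDcst pcst_LDcst subcomplex_LD subcomplex_LDcst unfolding subcomplex_def
    by (intro projection_complement) (auto simp: pcst_diff)
  show "\<exists>a\<in>LDcst n1 m1 n2 m2. \<exists>b\<in>LDpos n1 m1 n2 m2. f = a + b" if "f \<in> LD n1 m1 n2 m2" for f
    using that pcst_in_LDcst unfolding LDpos_eq by force
qed

end
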